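(* Run the main loop of $c$-Adaptive ShiversSort on a sequence of positive run lengths $q_1,\dots,q_\rho$ with $\sum_i q_i=n$. Let $m$ be the total length of all merged runs created during the main loop. Then $\sum (r_1+r_2)\le 2(n+m)$, where the sum is over all failed checks and $r_1,r_2$ are the lengths of the top two stack entries at the time of that check. In particular, $\sum 2\max\{r_1,r_2\}\le 4(n+m)$ over the same failed checks.
   Context: Fix $c>0$. The main loop of $c$-Adaptive ShiversSort maintains a stack $S$ of run lengths. The top entry is called $R_1$ with length $r_1$, the next $R_2$ with length $r_2$, and so on. For $t=1,\dots,\rho$ it does the following. It pushes a new run of length $q_t$. Then, while $|S|\ge3$ and $\ell_3\le\max\{\ell_1,\ell_2\}$, where $\ell_i=\lfloor\log_2(r_i/c)\rfloor$, it replaces $R_3$ and $R_2$ by a single new run of length $r_3+r_2$, occupying the second position. Each such newly created run is a merged run. A failed check is an evaluation of the while-condition with $|S|\ge3$ that evaluates to false. *)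

theory Defs
  imports Complex_Main
begin

text \<open>Stack of run lengths as a list; the head is the top entry R_1.\<close>

definition lvl :: "real \<Rightarrow> nat \<Rightarrow> int" where
  "lvl c r = \<lfloor>log 2 (real r / c)\<rfloor>"

text \<open>Returns the final stack, the list of
lengths of merged runs created, and the list of pairs (r1, r2) recorded at
each failed check (an evaluation of the condition with at least 3 entries
that evaluates to false).\<close>

function collapse :: "real \<Rightarrow> nat list \<Rightarrow> nat list \<times> nat list \<times> (nat \<times> nat) list" where
  "collapse c (r1 # r2 # r3 # rest) =
     (if lvl c r3 \<le> max (lvl c r1) (lvl c r2)
      then (case collapse c (r1 # (r3 + r2) # rest) of
              (S', ms, fs) \<Rightarrow> (S', (r3 + r2) # ms, fs))
      else (r1 # r2 # r3 # rest, [], [(r1, r2)]))"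
| "collapse c [] = ([], [], [])"
| "collapse c [r1] = ([r1], [], [])"
| "collapse c [r1, r2] = ([r1, r2], [], [])"
  by pat_completeness auto
termination
  by (relation "measure (\<lambda>(c, S). length S)") auto

fun main_loop :: "real \<Rightarrow> nat list \<Rightarrow> nat list \<Rightarrow> nat list \<times> nat list \<times> (nat \<times> nat) list" where
  "main_loop c S [] = (S, [], [])"
| "main_loop c S (q # qs) =
     (case collapse c (q # S) of
        (S1, ms1, fs1) \<Rightarrow>
          (case main_loop c S1 qs of
             (S2, ms2, fs2) \<Rightarrow> (S2, ms1 @ ms2, fs1 @ fs2)))"

end

theory Submission
  imports Defs
begin

(* The inner loop never touches the top run, and it has at most one failed
check, which ends it.  At that check R_1 is the run q just pushed and R_2 is
either the previous top run or the last merged run, so r_1 + r_2 is at most q, plus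
the previous top, plus the merged lengths of this round.  Summed over the main loop,
every q_t is charged twice (as pushed run and as the next round's previous top) and
every merged run once, which gives the bound 2n + m. *)

lemma collapse_keeps_top:
  "collapse c S = (S', ms, fs) \<Longrightarrow> take 1 S' = take 1 S"
  by (induction c S arbitrary: S' ms fs rule: collapse.induct)
    (auto split: if_splits prod.splits)

lemma collapse_failed_checks_le:
  "collapse c S = (S', ms, fs) \<Longrightarrow>
     (\<Sum>(r1, r2)\<leftarrow>fs. r1 + r2) \<le> sum_list (take 2 S) + sum_list ms"
  by (induction c S arbitrary: S' ms fs rule: collapse.induct)
    (fastforce split: if_splits prod.splits)+

lemma main_loop_failed_checks_le:
  "main_loop c S qs = (S', ms, fs) \<Longrightarrow>
     (\<Sum>(r1, r2)\<leftarrow>fs. r1 + r2) \<le> sum_list (take 1 S) + 2 * sum_list qs + sum_list ms"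
proof (induction qs arbitrary: S S' ms fs)
  case Nil
  then show ?case by simp
next
  case (Cons q qs)
  obtain S1 ms1 fs1 where step: "collapse c (q # S) = (S1, ms1, fs1)"
    by (metis prod_cases3)
  obtain ms2 fs2 where rest: "main_loop c S1 qs = (S', ms2, fs2)"
    using Cons.prems step by (auto split: prod.splits)
  have appended: "ms = ms1 @ ms2" "fs = fs1 @ fs2"
    using Cons.prems step rest by auto
  have "take 1 S1 = [q]"
    using collapse_keeps_top[OF step] by simp
  then have "(\<Sum>(r1, r2)\<leftarrow>fs2. r1 + r2) \<le> q + 2 * sum_list qs + sum_list ms2"
    using Cons.IH[OF rest] by simp
  moreover have "(\<Sum>(r1, r2)\<leftarrow>fs1. r1 + r2) \<le> q + sum_list (take 1 S) + sum_list ms1"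
    using collapse_failed_checks_le[OF step] by (cases S) auto
  ultimately show ?case
    unfolding appended by simp
qed

lemma sum_list_double_max_le:
  "(\<Sum>(a, b)\<leftarrow>ps. 2 * max a b) \<le> 2 * (\<Sum>(a, b)\<leftarrow>ps. a + b :: nat)"
  by (induction ps) auto

theorem mainTheorem9:
  fixes c :: real and qs :: "nat list" and n :: nat
  assumes "c > 0"
    and "\<forall>q\<in>set qs. q > 0"
    and "n = sum_list qs"
  shows "(case main_loop c [] qs of (S, ms, fs) \<Rightarrow>
            (\<Sum>(r1, r2)\<leftarrow>fs. r1 + r2) \<le> 2 * (n + sum_list ms) \<and>
            (\<Sum>(r1, r2)\<leftarrow>fs. 2 * max r1 r2) \<le> 4 * (n + sum_list ms))"
proof -
  obtain S ms fs where run: "main_loop c [] qs = (S, ms, fs)"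
    by (metis prod_cases3)
  have sum_le: "(\<Sum>(r1, r2)\<leftarrow>fs. r1 + r2) \<le> 2 * (n + sum_list ms)"
    using main_loop_failed_checks_le[OF run] assms(3) by simp
  moreover have "(\<Sum>(r1, r2)\<leftarrow>fs. 2 * max r1 r2) \<le> 4 * (n + sum_list ms)"
    using sum_list_double_max_le[of fs] sum_le by linarith
  ultimately show ?thesis
    using run by simp
qed

end
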